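(* Let $A\in\mathbb{R}^{2\times2}$ be such that $(e^{t(A-s(A))})_{t\ge0}$ is bounded. If the semigroup $(e^{tA})_{t\ge0}$ is asymptotically positive, then it is positive.
   Context: $\mathbb{C}^2$ carries the coordinatewise order; $d_+(f)=\operatorname{dist}(f,\mathbb{C}^2_+)$; $s(A)$ is the spectral bound. The semigroup is asymptotically positive if $d_+(e^{t(A-s(A))}f)\to0$ as $t\to\infty$ for every $f\ge0$; positive means every $e^{tA}$ has non-negative entries. *)

theory Defs
  imports "HOL-Analysis.Analysis"
begin

primrec mat_pow :: "'a::semiring_1^'n^'n \<Rightarrow> nat \<Rightarrow> 'a^'n^'n" where
  "mat_pow A 0 = mat 1"
| "mat_pow A (Suc k) = A ** mat_pow A k"

definition mat_exp :: "'a::{real_normed_field,banach}^'n^'n \<Rightarrow> 'a^'n^'n" where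
  "mat_exp A = (\<Sum>k. (1 / fact k) *\<^sub>R mat_pow A k)"

definition cmat :: "real^'n^'n \<Rightarrow> complex^'n^'n" where
  "cmat A = map_matrix complex_of_real A"

definition spec :: "real^'n^'n \<Rightarrow> complex set" where
  "spec A = {z. det (cmat A - mat z) = 0}"

definition spectral_bound :: "real^'n^'n \<Rightarrow> real" where
  "spectral_bound A = Max (Re ` spec A)"

definition cpos :: "(complex^'n) set" where
  "cpos = {f. \<forall>i. f $ i \<in> \<real> \<and> 0 \<le> Re (f $ i)}"

definition dplus :: "complex^'n \<Rightarrow> real" where
  "dplus f = infdist f cpos"

definition rescaled_sg :: "real^'n^'n \<Rightarrow> real \<Rightarrow> complex^'n^'n" where
  "rescaled_sg A t = mat_exp (t *\<^sub>R (cmat A - mat (complex_of_real (spectral_bound A))))"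

definition asymptotically_positive :: "real^'n^'n \<Rightarrow> bool" where
  "asymptotically_positive A \<longleftrightarrow>
     (\<forall>f \<in> cpos. ((\<lambda>t. dplus (rescaled_sg A t *v f)) \<longlongrightarrow> 0) at_top)"

definition positive_semigroup :: "real^'n^'n \<Rightarrow> bool" where
  "positive_semigroup A \<longleftrightarrow> (\<forall>t\<ge>0. \<forall>i j. 0 \<le> mat_exp (t *\<^sub>R A) $ i $ j)"

end

(*
  For a real 2x2 matrix everything is explicit: by Cayley-Hamilton, exp M = U M + V I with
  U, V determined by the eigenvalues of M. Let D be the discriminant of the characteristic
  polynomial of A and B = A - s(A). If D < 0, the eigenvalues of B are +-iw and the rescaled
  semigroup equals -I at every time t with tw an odd multiple of pi, contradicting asymptotic
  positivity. If D = 0, the off-diagonal entries of exp (tB) are t a_ij, so boundedness forces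
  them to vanish. If D > 0, they converge to a_ij / sqrt D, so asymptotic positivity forces
  a_ij >= 0. Finally, if both off-diagonal entries of A are nonnegative, its eigenvalues are
  real and enclose the diagonal entries, and the explicit formula shows exp (tA) >= 0.
*)

theory Submission
  imports Defs
begin


(* Cayley-Hamilton: M * M = (tr M) M - (det M) I, whence M^k = u_k M + v_k I. *)
lemma mat_pow_2x2:
  fixes M :: "'a::comm_ring_1^2^2" and u v :: "nat \<Rightarrow> 'a"
  assumes "u 0 = 0" "v 0 = 1"
    and "\<And>k. u (Suc k) = (M$1$1 + M$2$2) * u k + v k"
    and "\<And>k. v (Suc k) = - (M$1$1 * M$2$2 - M$1$2 * M$2$1) * u k"
  shows "mat_pow M k = (\<chi> i j. u k * M$i$j + (if i = j then v k else 0))"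
proof (induction k)
  case 0
  then show ?case using assms(1,2) by (simp add: vec_eq_iff mat_def)
next
  case (Suc k)
  show ?case
    by (simp add: Suc vec_eq_iff matrix_matrix_mult_def sum_2 forall_2 assms(3,4) algebra_simps)
qed

lemma sums_vec_lambda2:
  fixes g :: "nat \<Rightarrow> 'i::finite \<Rightarrow> 'j::finite \<Rightarrow> 'a::real_normed_vector"
  assumes "\<And>i j. (\<lambda>k. g k i j) sums h i j"
  shows "(\<lambda>k. \<chi> i j. g k i j) sums (\<chi> i j. h i j)"
proof -
  have "(\<lambda>n. \<Sum>k<n. \<chi> i j. g k i j) = (\<lambda>n. \<chi> i j. \<Sum>k<n. g k i j)"
    by (rule ext) (simp add: vec_eq_iff)
  moreover have "(\<lambda>n. \<chi> i j. \<Sum>k<n. g k i j) \<longlonglongrightarrow> (\<chi> i j. h i j)"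
    using assms unfolding sums_def by (intro tendsto_vec_lambda)
  ultimately show ?thesis unfolding sums_def by simp
qed

lemma mat_exp_2x2:
  fixes M :: "'a::{real_normed_field,banach}^2^2" and u v :: "nat \<Rightarrow> 'a"
  assumes "u 0 = 0" "v 0 = 1"
    and "\<And>k. u (Suc k) = (M$1$1 + M$2$2) * u k + v k"
    and "\<And>k. v (Suc k) = - (M$1$1 * M$2$2 - M$1$2 * M$2$1) * u k"
    and "(\<lambda>k. u k /\<^sub>R fact k) sums U" and "(\<lambda>k. v k /\<^sub>R fact k) sums V"
  shows "mat_exp M = (\<chi> i j. U * M$i$j + (if i = j then V else 0))"
proof -
  have "(\<lambda>k. (1 / fact k) *\<^sub>R mat_pow M k)
      = (\<lambda>k. \<chi> i j. (u k /\<^sub>R fact k) * M$i$j + (if i = j then v k /\<^sub>R fact k else 0))"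
    by (rule ext) (simp add: mat_pow_2x2[OF assms(1-4)] vec_eq_iff,
        simp add: scaleR_conv_of_real divide_inverse distrib_left)
  moreover have "(\<lambda>k. (u k /\<^sub>R fact k) * M$i$j + (if i = j then v k /\<^sub>R fact k else 0))
      sums (U * M$i$j + (if i = j then V else 0))" for i j
    using sums_add[OF sums_mult2[OF assms(5), of "M$i$j"] assms(6)]
      sums_mult2[OF assms(5), of "M$i$j"]
    by (cases "i = j") simp_all
  ultimately show ?thesis
    unfolding mat_exp_def by (simp add: sums_unique[OF sums_vec_lambda2, symmetric])
qed

lemma divide_scaleR_commute:
  fixes x y :: "'a::real_normed_field"
  shows "(x / y) /\<^sub>R c = (x /\<^sub>R c) / y"
  by (simp add: scaleR_conv_of_real)

lemma mat_exp_2x2_distinct: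
  fixes M :: "'a::{real_normed_field,banach}^2^2"
  assumes "l \<noteq> m" "l + m = M$1$1 + M$2$2" "l * m = M$1$1 * M$2$2 - M$1$2 * M$2$1"
  shows "mat_exp M = (\<chi> i j. (exp l - exp m) / (l - m) * M$i$j
                        + (if i = j then (l * exp m - m * exp l) / (l - m) else 0))"
proof (rule mat_exp_2x2)
  fix k
  have "l ^ Suc k - m ^ Suc k = (l + m) * (l^k - m^k) + (l * m^k - m * l^k)"
    by (simp add: algebra_simps)
  then show "(l ^ Suc k - m ^ Suc k) / (l - m) = (M$1$1 + M$2$2) * ((l^k - m^k) / (l - m))
          + (l * m^k - m * l^k) / (l - m)"
    unfolding assms(2)[symmetric] by (metis add_divide_distrib times_divide_eq_right)
  have "l * m ^ Suc k - m * l ^ Suc k = - (l * m) * (l^k - m^k)"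
    by (simp add: algebra_simps)
  then show "(l * m ^ Suc k - m * l ^ Suc k) / (l - m)
          = - (M$1$1 * M$2$2 - M$1$2 * M$2$1) * ((l^k - m^k) / (l - m))"
    unfolding assms(3)[symmetric] by (metis times_divide_eq_right)
next
  show "(\<lambda>k. ((l^k - m^k) / (l - m)) /\<^sub>R fact k) sums ((exp l - exp m) / (l - m))"
    unfolding divide_scaleR_commute scaleR_diff_right
    by (intro sums_divide sums_diff exp_converges)
  show "(\<lambda>k. ((l * m^k - m * l^k) / (l - m)) /\<^sub>R fact k) sums ((l * exp m - m * exp l) / (l - m))"
    unfolding divide_scaleR_commute scaleR_diff_right mult_scaleR_right[symmetric]
    by (intro sums_divide sums_diff sums_mult exp_converges)
qed (use assms in simp_all)

lemma exp_series_derivative_sums: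
  fixes l :: "'a::{real_normed_field,banach}"
  shows "(\<lambda>k. (of_nat k * l^(k - 1)) /\<^sub>R fact k) sums exp l"
proof -
  have "(of_nat (Suc k) * l^(Suc k - 1)) /\<^sub>R fact (Suc k) = l^k /\<^sub>R fact k" for k
    by (simp add: scaleR_conv_of_real field_simps del: of_nat_Suc)
  then have "(\<lambda>k. (of_nat (Suc k) * l^(Suc k - 1)) /\<^sub>R fact (Suc k)) sums exp l"
    using exp_converges[of l] by simp
  then show ?thesis
    by (subst (asm) sums_Suc_iff) simp
qed

lemma mat_exp_2x2_repeated:
  fixes M :: "'a::{real_normed_field,banach}^2^2"
  assumes "l + l = M$1$1 + M$2$2" "l * l = M$1$1 * M$2$2 - M$1$2 * M$2$1"
  shows "mat_exp M = (\<chi> i j. exp l * M$i$j + (if i = j then (1 - l) * exp l else 0))"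
proof (rule mat_exp_2x2)
  fix k
  show "of_nat (Suc k) * l ^ (Suc k - 1) = (M$1$1 + M$2$2) * (of_nat k * l^(k - 1)) + (1 - of_nat k) * l^k"
    unfolding assms(1)[symmetric] by (cases k) (simp_all add: algebra_simps)
  show "(1 - of_nat (Suc k)) * l ^ Suc k = - (M$1$1 * M$2$2 - M$1$2 * M$2$1) * (of_nat k * l^(k - 1))"
    unfolding assms(2)[symmetric] by (cases k) (simp_all add: algebra_simps)
next
  show "(\<lambda>k. (of_nat k * l^(k - 1)) /\<^sub>R fact k) sums exp l"
    by (rule exp_series_derivative_sums)
  have "(\<lambda>k. l^k /\<^sub>R fact k - l * ((of_nat k * l^(k - 1)) /\<^sub>R fact k)) sums (exp l - l * exp l)"
    by (intro sums_diff sums_mult exp_converges exp_series_derivative_sums)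
  moreover have "l^k /\<^sub>R fact k - l * ((of_nat k * l^(k - 1)) /\<^sub>R fact k)
      = ((1 - of_nat k) * l^k) /\<^sub>R fact k" for k
    by (cases k) (simp_all add: algebra_simps)
  moreover have "exp l - l * exp l = (1 - l) * exp l"
    by (simp add: algebra_simps)
  ultimately show "(\<lambda>k. ((1 - of_nat k) * l^k) /\<^sub>R fact k) sums ((1 - l) * exp l)"
    by simp
qed simp_all

lemma mat_exp_scaleR_2x2_distinct:
  fixes M :: "'a::{real_normed_field,banach}^2^2"
  assumes "l \<noteq> m" "l + m = M$1$1 + M$2$2" "l * m = M$1$1 * M$2$2 - M$1$2 * M$2$1" "t \<noteq> 0"
  shows "mat_exp (t *\<^sub>R M) = (\<chi> i j. (exp (t *\<^sub>R l) - exp (t *\<^sub>R m)) / (l - m) * M$i$j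
           + (if i = j then (l * exp (t *\<^sub>R m) - m * exp (t *\<^sub>R l)) / (l - m) else 0))"
proof -
  have "t *\<^sub>R l \<noteq> t *\<^sub>R m" "t *\<^sub>R l + t *\<^sub>R m = (t *\<^sub>R M)$1$1 + (t *\<^sub>R M)$2$2"
    "t *\<^sub>R l * t *\<^sub>R m = (t *\<^sub>R M)$1$1 * (t *\<^sub>R M)$2$2 - (t *\<^sub>R M)$1$2 * (t *\<^sub>R M)$2$1"
    using assms by (simp_all add: scaleR_add_right[symmetric] scaleR_diff_right[symmetric])
  note exp_tM = mat_exp_2x2_distinct[OF this]
  have "t *\<^sub>R l - t *\<^sub>R m = t *\<^sub>R (l - m)"
    by (simp add: scaleR_diff_right)
  moreover have "x / (t *\<^sub>R y) * (t *\<^sub>R z) = x / y * z" for x y z :: 'a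
    using assms(4) by (simp add: scaleR_conv_of_real)
  moreover have "(t *\<^sub>R l * x - t *\<^sub>R m * y) / (t *\<^sub>R (l - m)) = (l * x - m * y) / (l - m)" for x y
    using assms(4) by (simp add: scaleR_conv_of_real mult.assoc right_diff_distrib[symmetric])
  ultimately show ?thesis
    unfolding exp_tM by (simp add: vec_eq_iff)
qed

lemma mat_exp_scaleR_2x2_repeated:
  fixes M :: "'a::{real_normed_field,banach}^2^2"
  assumes "l + l = M$1$1 + M$2$2" "l * l = M$1$1 * M$2$2 - M$1$2 * M$2$1"
  shows "mat_exp (t *\<^sub>R M) = (\<chi> i j. exp (t *\<^sub>R l) * (t *\<^sub>R M$i$j)
           + (if i = j then (1 - t *\<^sub>R l) * exp (t *\<^sub>R l) else 0))"
proof -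
  have "t *\<^sub>R l + t *\<^sub>R l = (t *\<^sub>R M)$1$1 + (t *\<^sub>R M)$2$2"
    "t *\<^sub>R l * t *\<^sub>R l = (t *\<^sub>R M)$1$1 * (t *\<^sub>R M)$2$2 - (t *\<^sub>R M)$1$2 * (t *\<^sub>R M)$2$1"
    using assms by (simp_all add: scaleR_add_right[symmetric] scaleR_diff_right[symmetric])
  from mat_exp_2x2_repeated[OF this] show ?thesis
    by simp
qed

lemma spec_2x2:
  fixes A :: "real^2^2"
  assumes "l + m = of_real (A$1$1 + A$2$2)" "l * m = of_real (A$1$1 * A$2$2 - A$1$2 * A$2$1)"
  shows "spec A = {l, m}" "spectral_bound A = max (Re l) (Re m)"
proof -
  have "det (cmat A - mat z) = (z - l) * (z - m)" for z
  proof -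
    have "det (cmat A - mat z) = (of_real (A$1$1) - z) * (of_real (A$2$2) - z) - of_real (A$1$2) * of_real (A$2$1)"
      by (simp add: det_2 cmat_def mat_def)
    also have "\<dots> = z * z - (l + m) * z + l * m"
      unfolding assms by (simp add: algebra_simps)
    finally show ?thesis
      by (simp add: algebra_simps)
  qed
  then show spec: "spec A = {l, m}"
    unfolding spec_def by auto
  show "spectral_bound A = max (Re l) (Re m)"
    unfolding spectral_bound_def spec by simp
qed

definition rescaled_generator :: "real^'n^'n \<Rightarrow> complex^'n^'n" where
  "rescaled_generator A = cmat A - mat (complex_of_real (spectral_bound A))"

lemma rescaled_sg_eq_mat_exp: "rescaled_sg A t = mat_exp (t *\<^sub>R rescaled_generator A)"
  by (simp add: rescaled_sg_def rescaled_generator_def)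

lemma rescaled_generator_nth:
  "rescaled_generator A $ i $ j = complex_of_real (A$i$j - (if i = j then spectral_bound A else 0))"
  by (simp add: rescaled_generator_def cmat_def mat_def)

definition char_poly_discriminant :: "real^2^2 \<Rightarrow> real" where
  "char_poly_discriminant A = (A$1$1 - A$2$2)^2 + 4 * A$1$2 * A$2$1"

lemma eigenvalues_2x2:
  fixes A :: "real^2^2"
  assumes "z * z = complex_of_real (char_poly_discriminant A)"
  defines "p \<equiv> complex_of_real ((A$1$1 + A$2$2) / 2)"
  shows "(p + z / 2) + (p - z / 2) = of_real (A$1$1 + A$2$2)"
    and "(p + z / 2) * (p - z / 2) = of_real (A$1$1 * A$2$2 - A$1$2 * A$2$1)"
proof -
  show "(p + z / 2) + (p - z / 2) = of_real (A$1$1 + A$2$2)"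
    by (simp add: p_def)
  have "(p + z / 2) * (p - z / 2) = p * p - (z * z) / 4"
    by (simp add: field_simps)
  also have "\<dots> = of_real ((A$1$1 + A$2$2) / 2 * ((A$1$1 + A$2$2) / 2) - char_poly_discriminant A / 4)"
    unfolding assms(1) p_def by simp
  also have "\<dots> = of_real (A$1$1 * A$2$2 - A$1$2 * A$2$1)"
    by (simp add: char_poly_discriminant_def field_simps power2_eq_square)
  finally show "(p + z / 2) * (p - z / 2) = of_real (A$1$1 * A$2$2 - A$1$2 * A$2$1)" .
qed

(* If z is a square root of the discriminant, the eigenvalues of A are tr A / 2 +- z / 2;
   writing s(A) = tr A / 2 + sigma, those of A - s(A) are +-z / 2 - sigma. *)
lemma rescaled_generator_2x2_eigenvalues:
  fixes A :: "real^2^2"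
  assumes "z * z = complex_of_real (char_poly_discriminant A)"
    and "spectral_bound A = (A$1$1 + A$2$2) / 2 + \<sigma>"
  defines "B \<equiv> rescaled_generator A"
  shows "(z / 2 - of_real \<sigma>) + (- z / 2 - of_real \<sigma>) = B$1$1 + B$2$2"
    and "(z / 2 - of_real \<sigma>) * (- z / 2 - of_real \<sigma>) = B$1$1 * B$2$2 - B$1$2 * B$2$1"
proof -
  show "(z / 2 - of_real \<sigma>) + (- z / 2 - of_real \<sigma>) = B$1$1 + B$2$2"
    unfolding B_def rescaled_generator_nth assms(2) by (simp add: field_simps)
  have "(z / 2 - of_real \<sigma>) * (- z / 2 - of_real \<sigma>)
      = of_real (\<sigma> * \<sigma> - char_poly_discriminant A / 4)"
    using assms(1) by (simp add: field_simps)
  also have "\<sigma> * \<sigma> - char_poly_discriminant A / 4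
      = (A$1$1 - spectral_bound A) * (A$2$2 - spectral_bound A) - A$1$2 * A$2$1"
    unfolding assms(2) char_poly_discriminant_def by (simp add: field_simps power2_eq_square)
  also have "complex_of_real \<dots> = B$1$1 * B$2$2 - B$1$2 * B$2$1"
    by (simp add: B_def rescaled_generator_nth)
  finally show "(z / 2 - of_real \<sigma>) * (- z / 2 - of_real \<sigma>) = B$1$1 * B$2$2 - B$1$2 * B$2$1" .
qed

lemma neg_Re_nth_le_dplus:
  fixes f :: "complex^'n"
  shows "- Re (f $ i) \<le> dplus f"
proof -
  have "0 \<in> cpos"
    unfolding cpos_def by simp
  then have nonempty: "cpos \<noteq> {}"
    by blast
  show ?thesis
    unfolding dplus_def infdist_notempty[OF nonempty]
  proof (rule cINF_greatest[OF nonempty])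
    fix g :: "complex^'n"
    assume "g \<in> cpos"
    then have "0 \<le> Re (g $ i)"
      by (simp add: cpos_def)
    moreover have "Re ((g - f) $ i) \<le> norm ((g - f) $ i)"
      using abs_Re_le_cmod abs_le_D1 by blast
    moreover have "norm ((g - f) $ i) \<le> norm (g - f)"
      by (rule Finite_Cartesian_Product.norm_nth_le)
    ultimately show "- Re (f $ i) \<le> dist f g"
      by (simp add: dist_norm norm_minus_commute)
  qed
qed

lemma asymptotically_positive_eventually_entry_gt:
  fixes A :: "real^'n^'n"
  assumes "asymptotically_positive A" "0 < \<epsilon>"
  shows "eventually (\<lambda>t. - \<epsilon> < Re (rescaled_sg A t $ i $ j)) at_top"
proof -
  have "axis j 1 \<in> cpos"
    unfolding cpos_def by (simp add: axis_def)
  then have "((\<lambda>t. dplus (rescaled_sg A t *v axis j 1)) \<longlongrightarrow> 0) at_top"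
    using assms(1) unfolding asymptotically_positive_def by blast
  then have "eventually (\<lambda>t. dplus (rescaled_sg A t *v axis j 1) < \<epsilon>) at_top"
    using assms(2) by (rule order_tendstoD)
  then show ?thesis
  proof (rule eventually_mono)
    have "(R *v axis j 1) $ i = R $ i $ j" for R :: "complex^'n^'n"
      by (simp add: matrix_vector_mult_def axis_def if_distrib cong: if_cong)
    then have bound: "- Re (rescaled_sg A t $ i $ j) \<le> dplus (rescaled_sg A t *v axis j 1)" for t
      using neg_Re_nth_le_dplus[of "rescaled_sg A t *v axis j 1" i] by simp
    show "- \<epsilon> < Re (rescaled_sg A t $ i $ j)"
      if "dplus (rescaled_sg A t *v axis j 1) < \<epsilon>" for t
      using that bound[of t] by linarith
  qed
qed

lemma asymptotically_positive_entry_limit_nonneg: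
  fixes A :: "real^'n^'n"
  assumes "asymptotically_positive A" "((\<lambda>t. Re (rescaled_sg A t $ i $ j)) \<longlongrightarrow> x) at_top"
  shows "0 \<le> x"
proof (rule ccontr)
  assume "\<not> 0 \<le> x"
  then have "eventually (\<lambda>t. x / 2 < Re (rescaled_sg A t $ i $ j)) at_top"
    using asymptotically_positive_eventually_entry_gt[OF assms(1), of "- x / 2"] by simp
  then have "x / 2 \<le> x"
    by (rule tendsto_lowerbound[OF assms(2) eventually_mono]) simp_all
  with \<open>\<not> 0 \<le> x\<close> show False
    by simp
qed

(* The eigenvalues of A - s(A) are +-iw, so exp (t (A - s(A))) = -I whenever tw is an odd
   multiple of pi. *)
lemma rescaled_sg_odd_half_period_eq_minus_one:
  fixes A :: "real^2^2"
  assumes "char_poly_discriminant A < 0"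
  defines "w \<equiv> sqrt (- char_poly_discriminant A) / 2"
  shows "rescaled_sg A ((2 * of_nat k + 1) * pi / w) $ 1 $ 1 = -1"
proof -
  define l where "l = \<i> * complex_of_real w"
  define t where "t = (2 * of_nat k + 1) * pi / w"
  have w_pos: "0 < w"
    using assms(1) by (simp add: w_def)
  have "(2 * l) * (2 * l) = complex_of_real (char_poly_discriminant A)"
    using assms(1) by (simp add: l_def w_def algebra_simps flip: of_real_mult)
  note discriminant_root = this
  have "spectral_bound A = (A$1$1 + A$2$2) / 2 + 0"
    using spec_2x2(2)[OF eigenvalues_2x2[OF discriminant_root]] by (simp add: l_def)
  from rescaled_generator_2x2_eigenvalues[OF discriminant_root this]
  have eigenvalues_B: "l + - l = rescaled_generator A $ 1 $ 1 + rescaled_generator A $ 2 $ 2"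
    "l * - l = rescaled_generator A $ 1 $ 1 * rescaled_generator A $ 2 $ 2
               - rescaled_generator A $ 1 $ 2 * rescaled_generator A $ 2 $ 1"
    by simp_all
  have "t *\<^sub>R l = of_nat (2 * k + 1) * (\<i> * of_real pi)"
    using w_pos by (simp add: t_def l_def scaleR_conv_of_real)
  then have "exp (t *\<^sub>R l) = exp (\<i> * of_real pi) ^ (2 * k + 1)"
    by (simp only: exp_of_nat_mult)
  then have "exp (t *\<^sub>R l) = -1"
    by simp
  moreover have "l \<noteq> - l" "t \<noteq> 0"
    using w_pos by (simp_all add: l_def t_def)
  ultimately show ?thesis
    unfolding t_def[symmetric] rescaled_sg_eq_mat_exp
      mat_exp_scaleR_2x2_distinct[OF \<open>l \<noteq> - l\<close> eigenvalues_B \<open>t \<noteq> 0\<close>]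
    by (simp add: exp_minus divide_simps)
qed

lemma char_poly_discriminant_nonneg_if_asymptotically_positive:
  fixes A :: "real^2^2"
  assumes "asymptotically_positive A"
  shows "0 \<le> char_poly_discriminant A"
proof (rule ccontr)
  assume "\<not> 0 \<le> char_poly_discriminant A"
  define w where "w = sqrt (- char_poly_discriminant A) / 2"
  have w_pos: "0 < w"
    using \<open>\<not> 0 \<le> char_poly_discriminant A\<close> by (simp add: w_def)
  obtain T where T: "\<And>t. T \<le> t \<Longrightarrow> -1 < Re (rescaled_sg A t $ 1 $ 1)"
    using asymptotically_positive_eventually_entry_gt[OF assms, of 1 1 1]
    by (auto simp: eventually_at_top_linorder)
  obtain k :: nat where "T * w / pi < of_nat k"
    using reals_Archimedean2 by blast
  then have "T * w < of_nat k * pi"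
    by (simp add: field_simps)
  also have "\<dots> \<le> (2 * of_nat k + 1) * pi"
    by (intro mult_right_mono) auto
  finally have "T \<le> (2 * of_nat k + 1) * pi / w"
    using w_pos by (simp add: pos_le_divide_eq)
  with T show False
    using rescaled_sg_odd_half_period_eq_minus_one[of A k] \<open>\<not> 0 \<le> char_poly_discriminant A\<close>
    unfolding w_def by fastforce
qed

lemma eq_0_if_bounded_on_nonneg_ray:
  fixes b K :: real
  assumes "\<And>t. 0 \<le> t \<Longrightarrow> \<bar>t * b\<bar> \<le> K"
  shows "b = 0"
proof (rule ccontr)
  assume "b \<noteq> 0"
  then have "\<bar>(\<bar>K\<bar> + 1) / \<bar>b\<bar> * b\<bar> = \<bar>K\<bar> + 1"
    by (simp add: abs_mult)
  then show False
    using assms[of "(\<bar>K\<bar> + 1) / \<bar>b\<bar>"] by simp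
qed

lemma off_diagonal_eq_0_if_bounded:
  fixes A :: "real^2^2"
  assumes "bounded (rescaled_sg A ` {0..})" "char_poly_discriminant A = 0" "i \<noteq> j"
  shows "A$i$j = 0"
proof -
  have "0 * 0 = complex_of_real (char_poly_discriminant A)"
    using assms(2) by simp
  note discriminant_root = this
  have "spectral_bound A = (A$1$1 + A$2$2) / 2 + 0"
    using spec_2x2(2)[OF eigenvalues_2x2[OF discriminant_root]] by simp
  from rescaled_generator_2x2_eigenvalues[OF discriminant_root this]
  have eigenvalues_B: "0 + 0 = rescaled_generator A $ 1 $ 1 + rescaled_generator A $ 2 $ 2"
    "0 * 0 = rescaled_generator A $ 1 $ 1 * rescaled_generator A $ 2 $ 2
               - rescaled_generator A $ 1 $ 2 * rescaled_generator A $ 2 $ 1"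
    by simp_all
  have entry: "rescaled_sg A t $ i $ j = complex_of_real (t * A$i$j)" for t
    unfolding rescaled_sg_eq_mat_exp mat_exp_scaleR_2x2_repeated[OF eigenvalues_B]
    using assms(3) by (simp add: rescaled_generator_nth scaleR_conv_of_real)
  obtain K where K: "\<And>t. 0 \<le> t \<Longrightarrow> norm (rescaled_sg A t) \<le> K"
    using assms(1) unfolding bounded_iff by auto
  have "\<bar>t * A$i$j\<bar> \<le> K" if "0 \<le> t" for t
  proof -
    have "norm (rescaled_sg A t $ i $ j) \<le> norm (rescaled_sg A t $ i)"
      by (rule Finite_Cartesian_Product.norm_nth_le)
    also have "\<dots> \<le> norm (rescaled_sg A t)"
      by (rule Finite_Cartesian_Product.norm_nth_le)
    finally show ?thesis
      using K[OF that] by (simp add: entry norm_mult del: of_real_mult)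
  qed
  then show ?thesis
    by (rule eq_0_if_bounded_on_nonneg_ray)
qed

lemma rescaled_sg_off_diagonal_tendsto:
  fixes A :: "real^2^2"
  assumes "0 < char_poly_discriminant A" "i \<noteq> j"
  defines "r \<equiv> sqrt (char_poly_discriminant A)"
  shows "((\<lambda>t. Re (rescaled_sg A t $ i $ j)) \<longlongrightarrow> A$i$j / r) at_top"
proof -
  have r_pos: "0 < r"
    using assms(1) by (simp add: r_def)
  have "of_real r * of_real r = complex_of_real (char_poly_discriminant A)"
    using assms(1) by (simp add: r_def flip: of_real_mult)
  note discriminant_root = this
  have "spectral_bound A = (A$1$1 + A$2$2) / 2 + r / 2"
    using spec_2x2(2)[OF eigenvalues_2x2[OF discriminant_root]] r_pos by simp
  from rescaled_generator_2x2_eigenvalues[OF discriminant_root this]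
  have eigenvalues_B: "0 + - of_real r = rescaled_generator A $ 1 $ 1 + rescaled_generator A $ 2 $ 2"
    "0 * - of_real r = rescaled_generator A $ 1 $ 1 * rescaled_generator A $ 2 $ 2
               - rescaled_generator A $ 1 $ 2 * rescaled_generator A $ 2 $ 1"
    by simp_all
  have entry: "Re (rescaled_sg A t $ i $ j) = (1 - exp (- (t * r))) * A$i$j / r" if "t \<noteq> 0" for t
  proof -
    have "(0::complex) \<noteq> - of_real r"
      using r_pos by simp
    moreover have "exp (t *\<^sub>R - complex_of_real r) = of_real (exp (- (t * r)))"
      by (simp add: scaleR_conv_of_real exp_of_real flip: of_real_mult of_real_minus)
    ultimately show ?thesis
      unfolding rescaled_sg_eq_mat_exp mat_exp_scaleR_2x2_distinct[OF \<open>0 \<noteq> _\<close> eigenvalues_B that]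
      using assms(2) by (simp add: rescaled_generator_nth)
  qed
  have "filterlim (\<lambda>t. t * r) at_top at_top"
    using r_pos by (intro filterlim_at_top_mult_tendsto_pos[OF tendsto_const] filterlim_ident)
  then have "((\<lambda>t. exp (- (t * r))) \<longlongrightarrow> 0) at_top"
    by (intro filterlim_compose[OF exp_at_bot]) (simp add: filterlim_uminus_at_bot)
  then have "((\<lambda>t. (1 - exp (- (t * r))) * A$i$j / r) \<longlongrightarrow> (1 - 0) * A$i$j / r) at_top"
    using r_pos by (intro tendsto_intros) auto
  moreover have "eventually (\<lambda>t. (1 - exp (- (t * r))) * A$i$j / r = Re (rescaled_sg A t $ i $ j)) at_top"
    by (rule eventually_mono[OF eventually_gt_at_top[of 0]]) (simp add: entry)
  ultimately show ?thesis
    using Lim_transform_eventually by fastforce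
qed

lemma off_diagonal_nonneg_if_asymptotically_positive:
  fixes A :: "real^2^2"
  assumes "asymptotically_positive A" "0 < char_poly_discriminant A" "i \<noteq> j"
  shows "0 \<le> A$i$j"
proof -
  have "0 \<le> A$i$j / sqrt (char_poly_discriminant A)"
    using asymptotically_positive_entry_limit_nonneg[OF assms(1)]
      rescaled_sg_off_diagonal_tendsto[OF assms(2,3)] .
  then show ?thesis
    using assms(2) by (simp add: zero_le_divide_iff)
qed

lemma exp_chord_nonneg:
  fixes l m x :: real
  assumes "m < l" "m \<le> x" "x \<le> l"
  shows "0 \<le> (exp l - exp m) / (l - m) * x + (l * exp m - m * exp l) / (l - m)"
proof -
  have "(exp l - exp m) / (l - m) * x + (l * exp m - m * exp l) / (l - m)
      = ((exp l - exp m) * x + (l * exp m - m * exp l)) / (l - m)"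
    by (simp add: add_divide_distrib)
  also have "\<dots> = (exp l * (x - m) + exp m * (l - x)) / (l - m)"
    by (simp add: algebra_simps)
  also have "0 \<le> \<dots>"
    using assms by (intro divide_nonneg_pos add_nonneg_nonneg mult_nonneg_nonneg) auto
  finally show ?thesis .
qed

lemma mat_exp_2x2_nonneg:
  fixes M :: "real^2^2"
  assumes "0 \<le> M$1$2" "0 \<le> M$2$1"
  shows "0 \<le> mat_exp M $ i $ j"
proof -
  define r where "r = sqrt (char_poly_discriminant M)"
  have r_sq: "r * r = (M$1$1 - M$2$2)^2 + 4 * M$1$2 * M$2$1"
    using assms by (simp add: r_def char_poly_discriminant_def)
  have diagonal_gap: "\<bar>M$1$1 - M$2$2\<bar> \<le> r"
    unfolding r_def char_poly_discriminant_def using assms by (intro real_le_rsqrt) simp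
  have "\<forall>i j. 0 \<le> mat_exp M $ i $ j"
  proof (cases "r = 0")
    case True
    then have "M$2$2 = M$1$1" "M$1$2 * M$2$1 = 0"
      using diagonal_gap r_sq assms by (auto simp: add_nonneg_eq_0_iff)
    then have "M$1$1 + M$1$1 = M$1$1 + M$2$2" "M$1$1 * M$1$1 = M$1$1 * M$2$2 - M$1$2 * M$2$1"
      by simp_all
    note exp_M = mat_exp_2x2_repeated[OF this]
    have "exp (M$1$1) * M$1$1 + (1 - M$1$1) * exp (M$1$1) = exp (M$1$1)"
      by (simp add: algebra_simps)
    then show ?thesis
      unfolding exp_M forall_2 using assms \<open>M$2$2 = M$1$1\<close> by simp
  next
    case False
    then have "0 < r"
      using diagonal_gap by linarith
    define l where "l = (M$1$1 + M$2$2 + r) / 2"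
    define m where "m = (M$1$1 + M$2$2 - r) / 2"
    have "m < l" "l + m = M$1$1 + M$2$2" "l * m = M$1$1 * M$2$2 - M$1$2 * M$2$1"
      using \<open>0 < r\<close> r_sq by (simp_all add: l_def m_def field_simps power2_eq_square)
    moreover have "m \<le> M$1$1" "M$1$1 \<le> l" "m \<le> M$2$2" "M$2$2 \<le> l"
      using diagonal_gap by (simp_all add: l_def m_def)
    ultimately show ?thesis
      using mat_exp_2x2_distinct[of l m M] exp_chord_nonneg[of m l] assms
      by (simp add: forall_2)
  qed
  then show ?thesis
    by blast
qed

lemma positive_semigroup_if_off_diagonal_nonneg:
  fixes A :: "real^2^2"
  assumes "0 \<le> A$1$2" "0 \<le> A$2$1"
  shows "positive_semigroup A"
  unfolding positive_semigroup_def
  using assms by (auto intro!: mat_exp_2x2_nonneg)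

theorem proposition9p2:
  fixes A :: "real^2^2"
  assumes "bounded (rescaled_sg A ` {0..})"
    and "asymptotically_positive A"
  shows "positive_semigroup A"
proof -
  consider "char_poly_discriminant A = 0" | "0 < char_poly_discriminant A"
    using char_poly_discriminant_nonneg_if_asymptotically_positive[OF assms(2)] by linarith
  then have "0 \<le> A$1$2 \<and> 0 \<le> A$2$1"
  proof cases
    case 1
    then show ?thesis
      using off_diagonal_eq_0_if_bounded[OF assms(1) 1] by simp
  next
    case 2
    then show ?thesis
      using off_diagonal_nonneg_if_asymptotically_positive[OF assms(2) 2] by simp
  qed
  then show ?thesis
    by (intro positive_semigroup_if_off_diagonal_nonneg) auto
qed

end
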